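(* Let $\omega:[I^-,I^+]\to\mathbb{R}$ be $C^1$ with $\omega'(I)>0$ for all $I\in[I^-,I^+]$, let $T(I,\theta)=(I,\theta+\omega(I))$ on $[I^-,I^+]\times\mathbb{T}$, and let $T_\epsilon:[I^-,I^+]\times\mathbb{T}\to\mathbb{R}\times\mathbb{T}$ be a family of maps with $\|T_\epsilon-T\|_{C^1}\le C\epsilon$ for a constant $C$ independent of $\epsilon$. Let $\gamma_1=\{(I,f(I)):I\in(I_1,I_2)\}$ and $\gamma_2=\{(I,g(I)):I\in(I_1,I_2)\}$ be $C^1$ graphs over the same interval $(I_1,I_2)\subset[I^-,I^+]$, let $x_1\in\gamma_1$ and $\delta>0$. Then there exist $\epsilon_0>0$, $N\in\mathbb{N}$, $x_2\in\gamma_2$ and $\delta'>0$ such that for all $\epsilon\in(0,\epsilon_0)$, $T_\epsilon^N(B_\delta(x_1))\supset B_{\delta'}(x_2)$ (where $T_\epsilon^N$ is well defined on $B_\delta(x_1)$).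
   Context: $\mathbb{T}=\mathbb{R}/\mathbb{Z}$; $B_r(x)$ denotes the open ball of radius $r$ centred at $x$. *)

theory Defs
  imports "HOL-Analysis.Analysis"
begin

text \<open>Points of the cylinder \<open>\<real> \<times> \<T>\<close> (with \<open>\<T> = \<real>/\<int>\<close>) are represented by
  pairs \<open>(I, \<theta>) :: real \<times> real\<close>, the angle being read modulo 1.
  Maps of the cylinder are represented by their (degree one) lifts to \<open>\<real>\<^sup>2\<close>.\<close>

definition cyl_eq :: "real \<times> real \<Rightarrow> real \<times> real \<Rightarrow> bool" where
  "cyl_eq p q \<longleftrightarrow> fst p = fst q \<and> snd p - snd q \<in> \<int>"

definition cyl_dist :: "real \<times> real \<Rightarrow> real \<times> real \<Rightarrow> real" where
  "cyl_dist p q = (INF k::int. dist p (fst q, snd q + of_int k))"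

definition cyl_ball :: "real \<times> real \<Rightarrow> real \<Rightarrow> (real \<times> real) set" where
  "cyl_ball x r = {y. cyl_dist x y < r}"

definition twist :: "(real \<Rightarrow> real) \<Rightarrow> real \<times> real \<Rightarrow> real \<times> real" where
  "twist \<omega> x = (fst x, snd x + \<omega> (fst x))"

definition twist_deriv :: "(real \<Rightarrow> real) \<Rightarrow> real \<times> real \<Rightarrow> (real \<times> real) \<Rightarrow>\<^sub>L (real \<times> real)" where
  "twist_deriv \<omega>' x = Blinfun (\<lambda>h. (fst h, snd h + \<omega>' (fst x) * fst h))"

end

theory Submission
  imports Defs
begin

text \<open>The unperturbed map satisfies \<open>T\<^sup>N(I, \<theta>) = (I, \<theta> + N \<omega>(I))\<close>. As \<open>\<omega>\<close> is strictly
  increasing, for large \<open>N\<close> the image under \<open>T\<^sup>N\<close> of the piece of \<open>\<gamma>\<^sub>1\<close> over \<open>[a, a + s]\<close>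
  winds around the cylinder and crosses \<open>\<gamma>\<^sub>2\<close>: some lift \<open>(b, f a + v)\<close> is mapped onto
  \<open>(b, g b)\<close>. The inverse \<open>(I, \<theta>) \<mapsto> (I, \<theta> - N \<omega>(I))\<close> of \<open>T\<^sup>N\<close> is Lipschitz, and
  \<open>T\<^sub>\<epsilon>\<^sup>N - T\<^sup>N = O(\<epsilon>)\<close> near that point, so for \<open>z\<close> close to \<open>(b, g b)\<close> the map
  \<open>y \<mapsto> (T\<^sup>N)\<^sup>-\<^sup>1 (z - (T\<^sub>\<epsilon>\<^sup>N y - T\<^sup>N y))\<close> sends a small ball into itself; a
  Brouwer fixed point \<open>y\<close> satisfies \<open>T\<^sub>\<epsilon>\<^sup>N y = z\<close>.\<close>

lemma abs_fst_le_norm: "\<bar>fst (w :: real \<times> real)\<bar> \<le> norm w"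
  using norm_fst_le[of "fst w" "snd w"] by simp

lemma abs_snd_le_norm: "\<bar>snd (w :: real \<times> real)\<bar> \<le> norm w"
  using norm_snd_le[of "snd w" "fst w"] by simp

lemma continuous_on_funpow:
  assumes "continuous_on A T" and "\<And>y k. y \<in> S \<Longrightarrow> k < n \<Longrightarrow> (T ^^ k) y \<in> A"
  shows "continuous_on S (T ^^ n)"
  using assms(2)
proof (induction n)
  case (Suc n)
  have "continuous_on S (T \<circ> (T ^^ n))"
    by (rule continuous_on_compose) (use Suc assms(1) in \<open>auto intro: continuous_on_subset\<close>)
  then show ?case by simp
qed (simp add: continuous_on_id)

lemma continuous_on_takes_integer_value:
  fixes h :: "real \<Rightarrow> real"
  assumes "continuous_on {a..c} h" and "a \<le> c" and "h c + 1 \<le> h a"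
  shows "\<exists>b\<in>{a..c}. h b \<in> \<int>"
proof -
  have "h c \<le> of_int \<lfloor>h a\<rfloor>" "of_int \<lfloor>h a\<rfloor> \<le> h a"
    using assms(3) by linarith+
  then obtain b where "a \<le> b" "b \<le> c" "h b = of_int \<lfloor>h a\<rfloor>"
    using IVT2'[OF _ _ \<open>a \<le> c\<close> assms(1)] by blast
  then show ?thesis by (metis Ints_of_int atLeastAtMost_iff)
qed

lemma bounded_derivative_lipschitz_on_Icc:
  fixes \<omega> \<omega>' :: "real \<Rightarrow> real"
  assumes "\<And>x. x \<in> {lo..hi} \<Longrightarrow> (\<omega> has_real_derivative \<omega>' x) (at x within {lo..hi})"
    and "continuous_on {lo..hi} \<omega>'"
  obtains M where "M > 0"
    and "\<And>x y. x \<in> {lo..hi} \<Longrightarrow> y \<in> {lo..hi} \<Longrightarrow> \<bar>\<omega> x - \<omega> y\<bar> \<le> M * \<bar>x - y\<bar>"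
proof -
  have "bounded (\<omega>' ` {lo..hi})"
    using assms(2) by (intro compact_imp_bounded compact_continuous_image) auto
  then obtain M where "M > 0" "\<And>x. x \<in> {lo..hi} \<Longrightarrow> \<bar>\<omega>' x\<bar> \<le> M"
    unfolding bounded_pos by auto
  then show ?thesis
    using that field_differentiable_bound[OF convex_real_interval(5) assms(1), of M] by auto
qed

lemma pos_derivative_imp_less:
  fixes \<omega> \<omega>' :: "real \<Rightarrow> real"
  assumes "x < y" and sub: "{x..y} \<subseteq> S"
    and deriv: "\<And>I. I \<in> S \<Longrightarrow> (\<omega> has_real_derivative \<omega>' I) (at I within S)"
    and pos: "\<And>I. I \<in> S \<Longrightarrow> \<omega>' I > 0"
  shows "\<omega> x < \<omega> y"
proof -
  have "(\<omega> has_derivative (*) (\<omega>' I)) (at I within {x..y})" if "x \<le> I" "I \<le> y" for I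
    using has_derivative_subset[OF deriv[unfolded has_field_derivative_def] sub] that sub by auto
  then obtain I where I: "I \<in> {x<..<y}" and "\<omega> y - \<omega> x = \<omega>' I * (y - x)"
    using mvt_simple[OF \<open>x < y\<close>, of \<omega> "\<lambda>I. (*) (\<omega>' I)"] by blast
  moreover have "\<omega>' I > 0" using I sub by (intro pos) auto
  ultimately show ?thesis using \<open>x < y\<close> by (metis diff_gt_0_iff_gt mult_pos_pos)
qed

lemma mem_cyl_ball_iff: "z \<in> cyl_ball x r \<longleftrightarrow> (\<exists>k::int. dist x (fst z, snd z + of_int k) < r)"
proof -
  have "bdd_below (range (\<lambda>k::int. dist x (fst z, snd z + of_int k)))"
    by (rule bdd_belowI[where m = 0]) auto
  then show ?thesis
    by (simp add: cyl_ball_def cyl_dist_def cINF_less_iff)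
qed

lemma cyl_ball_shift_subset:
  assumes "dist x x' + r \<le> R"
  shows "cyl_ball (fst x', snd x' + of_int v) r \<subseteq> cyl_ball x R"
proof
  fix z assume "z \<in> cyl_ball (fst x', snd x' + of_int v) r"
  then obtain k :: int where k: "dist (fst x', snd x' + of_int v) (fst z, snd z + of_int k) < r"
    by (auto simp: mem_cyl_ball_iff)
  have "dist x' (fst z, snd z + of_int (k - v)) = dist (fst x', snd x' + of_int v) (fst z, snd z + of_int k)"
    by (cases x') (simp add: dist_Pair_Pair dist_real_def algebra_simps)
  then have "dist x (fst z, snd z + of_int (k - v)) < R"
    using dist_triangle[of x "(fst z, snd z + of_int (k - v))" x'] k assms by linarith
  then show "z \<in> cyl_ball x R" unfolding mem_cyl_ball_iff by blast
qed

lemma twist_funpow: "(twist \<omega> ^^ n) y = (fst y, snd y + real n * \<omega> (fst y))"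
  by (induction n) (auto simp: twist_def algebra_simps)

lemma twist_funpow_twist_inverse: "(twist \<omega> ^^ n) (twist (\<lambda>I. - (real n * \<omega> I)) w) = w"
  by (simp add: twist_funpow twist_def)

lemma twist_inverse_twist_funpow: "twist (\<lambda>I. - (real n * \<omega> I)) ((twist \<omega> ^^ n) y) = y"
  by (simp add: twist_funpow twist_def)

lemma norm_twist_diff_le:
  fixes \<omega> :: "real \<Rightarrow> real"
  assumes lip: "\<And>x y. x \<in> S \<Longrightarrow> y \<in> S \<Longrightarrow> \<bar>\<omega> x - \<omega> y\<bar> \<le> M * \<bar>x - y\<bar>"
    and "M \<ge> 0" and u: "fst u \<in> S" and v: "fst v \<in> S"
  shows "norm (twist \<omega> u - twist \<omega> v) \<le> (2 + M) * norm (u - v)"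
proof -
  have d1: "\<bar>fst u - fst v\<bar> \<le> norm (u - v)" and d2: "\<bar>snd u - snd v\<bar> \<le> norm (u - v)"
    using abs_fst_le_norm[of "u - v"] abs_snd_le_norm[of "u - v"] by simp_all
  have "norm (twist \<omega> u - twist \<omega> v) \<le> \<bar>fst u - fst v\<bar> + \<bar>snd u - snd v + (\<omega> (fst u) - \<omega> (fst v))\<bar>"
    using norm_Pair_le[of "fst u - fst v" "snd u - snd v + (\<omega> (fst u) - \<omega> (fst v))"]
    by (simp add: twist_def algebra_simps)
  also have "\<dots> \<le> \<bar>fst u - fst v\<bar> + \<bar>snd u - snd v\<bar> + M * \<bar>fst u - fst v\<bar>"
    using lip[OF u v] by linarith
  also have "\<dots> \<le> (2 + M) * norm (u - v)"
    using d1 d2 mult_left_mono[OF d1 \<open>M \<ge> 0\<close>] by (simp add: algebra_simps)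
  finally show ?thesis .
qed

lemma norm_twist_inverse_diff_le:
  fixes \<omega> :: "real \<Rightarrow> real"
  assumes lip: "\<And>x y. x \<in> S \<Longrightarrow> y \<in> S \<Longrightarrow> \<bar>\<omega> x - \<omega> y\<bar> \<le> M * \<bar>x - y\<bar>"
    and "M \<ge> 0" and "fst u \<in> S" and "fst v \<in> S"
  shows "norm (twist (\<lambda>I. - (real n * \<omega> I)) u - twist (\<lambda>I. - (real n * \<omega> I)) v)
           \<le> (2 + real n * M) * norm (u - v)"
proof (rule norm_twist_diff_le[where S = S])
  fix x y assume "x \<in> S" "y \<in> S"
  have "\<bar>- (real n * \<omega> x) - - (real n * \<omega> y)\<bar> = real n * \<bar>\<omega> x - \<omega> y\<bar>"
    by (simp add: abs_mult flip: right_diff_distrib abs_minus_commute)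
  also have "\<dots> \<le> real n * M * \<bar>x - y\<bar>"
    using lip[OF \<open>x \<in> S\<close> \<open>y \<in> S\<close>] by (simp add: mult_left_mono mult.assoc)
  finally show "\<bar>- (real n * \<omega> x) - - (real n * \<omega> y)\<bar> \<le> real n * M * \<bar>x - y\<bar>" .
qed (use assms in auto)

lemma twist_funpow_reaches_graph:
  fixes \<omega> g :: "real \<Rightarrow> real"
  assumes "a \<le> c" and "\<omega> a < \<omega> c"
    and "continuous_on {a..c} \<omega>" and "continuous_on {a..c} g"
  shows "\<exists>N::nat. \<exists>b\<in>{a..c}. \<exists>v::int. g b = \<theta> + of_int v + real N * \<omega> b"
proof -
  obtain N :: nat where N: "g c - g a + 1 < real N * (\<omega> c - \<omega> a)"
    using ex_less_of_nat_mult[of "\<omega> c - \<omega> a"] assms(2) by auto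
  define h where "h I = g I - real N * \<omega> I - \<theta>" for I
  have "continuous_on {a..c} h"
    unfolding h_def using assms(3,4) by (intro continuous_intros)
  moreover have "h c + 1 \<le> h a"
    using N by (simp add: h_def algebra_simps)
  ultimately obtain b where "b \<in> {a..c}" "h b \<in> \<int>"
    using continuous_on_takes_integer_value \<open>a \<le> c\<close> by blast
  then show ?thesis
    by (auto simp: h_def Ints_def algebra_simps intro!: exI[of _ N] bexI[of _ b])
qed

lemma funpow_perturbed_twist_close:
  fixes T :: "real \<times> real \<Rightarrow> real \<times> real"
  assumes close: "\<And>x. fst x \<in> {lo..hi} \<Longrightarrow> norm (T x - twist \<omega> x) \<le> e"
    and lip: "\<And>x y. x \<in> {lo..hi} \<Longrightarrow> y \<in> {lo..hi} \<Longrightarrow> \<bar>\<omega> x - \<omega> y\<bar> \<le> M * \<bar>x - y\<bar>"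
    and "M \<ge> 0" and "e \<ge> 0"
    and y: "fst y \<in> {lo + r..hi - r}"
    and small: "e * real n * (2 + M) ^ n \<le> r"
    and "k \<le> n"
  shows "norm ((T ^^ k) y - (twist \<omega> ^^ k) y) \<le> e * real k * (2 + M) ^ k
           \<and> fst ((T ^^ k) y) \<in> {lo..hi}"
proof -
  let ?L = "2 + M"
  have mono: "e * real j * ?L ^ j \<le> r" if "j \<le> n" for j
  proof -
    have "real j * ?L ^ j \<le> real n * ?L ^ n"
      using that \<open>M \<ge> 0\<close> by (intro mult_mono power_increasing) auto
    then show ?thesis
      using mult_left_mono[OF _ \<open>e \<ge> 0\<close>] small by (fastforce simp: mult.assoc)
  qed
  have y_in: "fst y \<in> {lo..hi}"
    using y mono[of 0] by auto
  have fst_in: "fst ((T ^^ j) y) \<in> {lo..hi}"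
    if "j \<le> n" "norm ((T ^^ j) y - (twist \<omega> ^^ j) y) \<le> e * real j * ?L ^ j" for j
  proof -
    have "\<bar>fst ((T ^^ j) y) - fst y\<bar> \<le> e * real j * ?L ^ j"
      using that(2) abs_fst_le_norm[of "(T ^^ j) y - (twist \<omega> ^^ j) y"] by (simp add: twist_funpow)
    then show ?thesis using mono[OF that(1)] y by auto
  qed
  have "norm ((T ^^ k) y - (twist \<omega> ^^ k) y) \<le> e * real k * ?L ^ k"
    using \<open>k \<le> n\<close>
  proof (induction k)
    case (Suc k)
    define u where "u = (T ^^ k) y"
    define v where "v = (twist \<omega> ^^ k) y"
    have IH: "norm (u - v) \<le> e * real k * ?L ^ k" using Suc by (simp add: u_def v_def)
    have u: "fst u \<in> {lo..hi}" using fst_in Suc IH by (simp add: u_def v_def)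
    have v: "fst v \<in> {lo..hi}" using y_in by (simp add: v_def twist_funpow)
    have "norm (T u - twist \<omega> v) \<le> norm (T u - twist \<omega> u) + norm (twist \<omega> u - twist \<omega> v)"
      using norm_triangle_ineq[of "T u - twist \<omega> u" "twist \<omega> u - twist \<omega> v"] by simp
    also have "\<dots> \<le> e + ?L * (e * real k * ?L ^ k)"
    proof -
      have "?L * norm (u - v) \<le> ?L * (e * real k * ?L ^ k)"
        using IH \<open>M \<ge> 0\<close> by (intro mult_left_mono) auto
      then show ?thesis
        using close[OF u] norm_twist_diff_le[OF lip \<open>M \<ge> 0\<close> u v] by linarith
    qed
    also have "\<dots> \<le> e * real (Suc k) * ?L ^ Suc k"
      using mult_left_mono[OF one_le_power[of ?L "Suc k"] \<open>e \<ge> 0\<close>] \<open>M \<ge> 0\<close>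
      by (simp add: algebra_simps)
    finally show ?case by (simp add: u_def v_def)
  qed simp
  then show ?thesis using fst_in \<open>k \<le> n\<close> by blast
qed

lemma perturbed_twist_funpow_hits:
  fixes T :: "real \<times> real \<Rightarrow> real \<times> real" and \<omega> :: "real \<Rightarrow> real"
  assumes cont_\<omega>: "continuous_on {lo..hi} \<omega>"
    and cont_T: "continuous_on ({lo..hi} \<times> UNIV) T"
    and close: "\<And>x. fst x \<in> {lo..hi} \<Longrightarrow> norm (T x - twist \<omega> x) \<le> e"
    and lip: "\<And>x y. x \<in> {lo..hi} \<Longrightarrow> y \<in> {lo..hi} \<Longrightarrow> \<bar>\<omega> x - \<omega> y\<bar> \<le> M * \<bar>x - y\<bar>"
    and "M \<ge> 0" and "e \<ge> 0"
    and small: "(2 + real n * M) * (e * real n * (2 + M) ^ n) \<le> r"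
    and w: "fst w \<in> {lo + 2 * r..hi - 2 * r}"
  shows "\<exists>y. dist y (twist (\<lambda>I. - (real n * \<omega> I)) w) \<le> r
           \<and> (\<forall>k<n. fst ((T ^^ k) y) \<in> {lo..hi}) \<and> (T ^^ n) y = w"
proof -
  define \<Phi> where "\<Phi> = twist (\<lambda>I. - (real n * \<omega> I))"
  define E where "E = e * real n * (2 + M) ^ n"
  define S where "S = cball (\<Phi> w) r"
  define D where "D y = (T ^^ n) y - (twist \<omega> ^^ n) y" for y
  define H where "H y = \<Phi> (w - D y)" for y
  have "0 \<le> E" using \<open>M \<ge> 0\<close> \<open>e \<ge> 0\<close> by (simp add: E_def)
  moreover have "E \<le> (2 + real n * M) * E"
    using mult_right_mono[of 1 "2 + real n * M" E] \<open>0 \<le> E\<close> \<open>M \<ge> 0\<close> by simp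
  ultimately have E: "0 \<le> E" "E \<le> r" using small unfolding E_def by linarith+
  have S_strip: "fst y \<in> {lo + r..hi - r}" if "y \<in> S" for y
  proof -
    have "\<bar>fst y - fst w\<bar> \<le> r"
      using that abs_fst_le_norm[of "y - \<Phi> w"]
      by (simp add: S_def \<Phi>_def twist_def dist_norm norm_minus_commute)
    then show ?thesis using w by auto
  qed
  have orbit_close: "norm ((T ^^ k) y - (twist \<omega> ^^ k) y) \<le> e * real k * (2 + M) ^ k
      \<and> fst ((T ^^ k) y) \<in> {lo..hi}" if "y \<in> S" "k \<le> n" for y k
    using funpow_perturbed_twist_close[OF close lip \<open>M \<ge> 0\<close> \<open>e \<ge> 0\<close> S_strip[OF that(1)] _ that(2)] E
    by (simp add: E_def)
  have orbit_in: "fst ((T ^^ k) y) \<in> {lo..hi}" if "y \<in> S" "k \<le> n" for y k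
    using orbit_close[OF that] by blast
  have D_fst: "fst (w - D y) \<in> {lo..hi}" if "y \<in> S" for y
  proof -
    have "\<bar>fst (D y)\<bar> \<le> E"
      using orbit_close[OF that order_refl] abs_fst_le_norm[of "D y"] unfolding D_def E_def by linarith
    then show ?thesis using w E by auto
  qed
  have HS: "H \<in> S \<rightarrow> S"
  proof
    fix y assume "y \<in> S"
    have "norm (H y - \<Phi> w) \<le> (2 + real n * M) * norm (D y)"
      using norm_twist_inverse_diff_le[OF lip \<open>M \<ge> 0\<close> D_fst[OF \<open>y \<in> S\<close>], of w n] w E
      by (simp add: H_def \<Phi>_def)
    also have "\<dots> \<le> (2 + real n * M) * E"
      using orbit_close[OF \<open>y \<in> S\<close> order_refl] \<open>M \<ge> 0\<close> by (intro mult_left_mono) (auto simp: D_def E_def)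
    finally show "H y \<in> S" using small by (simp add: S_def E_def dist_norm norm_minus_commute)
  qed
  have cont_H: "continuous_on S H"
  proof -
    have "continuous_on S (T ^^ n)"
      by (rule continuous_on_funpow[OF cont_T]) (use orbit_in in \<open>auto simp: mem_Times_iff\<close>)
    moreover have "continuous_on S (\<lambda>y. \<omega> (fst y))"
      by (rule continuous_on_compose2[OF cont_\<omega> continuous_on_fst]) (use orbit_in[of _ 0] in auto)
    ultimately have cont_arg: "continuous_on S (\<lambda>y. w - D y)"
      unfolding D_def twist_funpow by (intro continuous_intros)
    have cont_\<Phi>: "continuous_on ({lo..hi} \<times> UNIV) \<Phi>"
      unfolding \<Phi>_def twist_def
      by (intro continuous_intros continuous_on_compose2[OF cont_\<omega> continuous_on_fst]) auto
    show ?thesis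
      unfolding H_def
      by (rule continuous_on_compose2[OF cont_\<Phi> cont_arg])
        (use D_fst in \<open>auto intro!: image_subsetI simp: mem_Times_iff simp del: fst_diff\<close>)
  qed
  have "S \<noteq> {}" using E by (simp add: S_def)
  then obtain y where "y \<in> S" and "H y = y"
    using brouwer[of S H] HS cont_H by (auto simp: S_def)
  then have "(twist \<omega> ^^ n) y = w - D y"
    by (metis H_def \<Phi>_def twist_funpow_twist_inverse)
  then have "(T ^^ n) y = w" by (simp add: D_def)
  then show ?thesis
    using \<open>y \<in> S\<close> orbit_in by (intro exI[of _ y]) (auto simp: S_def \<Phi>_def dist_commute)
qed

lemma perturbed_twist_funpow_covers_cyl_ball:
  fixes T :: "real \<times> real \<Rightarrow> real \<times> real" and \<omega> :: "real \<Rightarrow> real"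
  assumes cont_\<omega>: "continuous_on {lo..hi} \<omega>"
    and cont_T: "continuous_on ({lo..hi} \<times> UNIV) T"
    and close: "\<And>x. fst x \<in> {lo..hi} \<Longrightarrow> norm (T x - twist \<omega> x) \<le> e"
    and lip: "\<And>x y. x \<in> {lo..hi} \<Longrightarrow> y \<in> {lo..hi} \<Longrightarrow> \<bar>\<omega> x - \<omega> y\<bar> \<le> M * \<bar>x - y\<bar>"
    and "M \<ge> 0" and "e \<ge> 0"
    and small: "(2 + real n * M) * (e * real n * (2 + M) ^ n) \<le> r"
    and \<rho>: "(2 + real n * M) * \<rho> \<le> r"
    and x: "fst x \<in> {lo + 3 * r..hi - 3 * r}"
    and z: "z \<in> cyl_ball ((twist \<omega> ^^ n) x) \<rho>"
  shows "\<exists>y \<in> cyl_ball x (2 * r). (\<forall>k<n. fst ((T ^^ k) y) \<in> {lo..hi}) \<and> cyl_eq ((T ^^ n) y) z"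
proof -
  define \<Phi> where "\<Phi> = twist (\<lambda>I. - (real n * \<omega> I))"
  obtain k :: int where "dist ((twist \<omega> ^^ n) x) (fst z, snd z + of_int k) < \<rho>"
    using z by (auto simp: mem_cyl_ball_iff)
  moreover define z' where "z' = (fst z, snd z + of_int k)"
  ultimately have dz: "dist ((twist \<omega> ^^ n) x) z' < \<rho>" by simp
  have "0 \<le> \<rho>" using dz zero_le_dist[of "(twist \<omega> ^^ n) x" z'] by linarith
  then have "\<rho> \<le> r"
    using \<rho> mult_right_mono[of 1 "2 + real n * M" \<rho>] \<open>M \<ge> 0\<close> by simp
  moreover have "\<bar>fst z' - fst x\<bar> \<le> dist ((twist \<omega> ^^ n) x) z'"
    using abs_fst_le_norm[of "z' - (twist \<omega> ^^ n) x"] by (simp add: dist_norm norm_minus_commute twist_funpow)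
  ultimately have z'_strip: "fst z' \<in> {lo + 2 * r..hi - 2 * r}"
    using dz x by (auto simp: abs_le_iff)
  obtain y where y: "dist y (\<Phi> z') \<le> r" "\<forall>k<n. fst ((T ^^ k) y) \<in> {lo..hi}" "(T ^^ n) y = z'"
    using perturbed_twist_funpow_hits[OF cont_\<omega> cont_T close lip \<open>M \<ge> 0\<close> \<open>e \<ge> 0\<close> small z'_strip]
    by (auto simp: \<Phi>_def)
  have "dist x (\<Phi> z') \<le> (2 + real n * M) * dist ((twist \<omega> ^^ n) x) z'"
  proof -
    have "fst ((twist \<omega> ^^ n) x) \<in> {lo..hi}" "fst z' \<in> {lo..hi}"
      using x z'_strip \<open>0 \<le> \<rho>\<close> \<open>\<rho> \<le> r\<close> by (auto simp: twist_funpow)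
    from norm_twist_inverse_diff_le[OF lip \<open>M \<ge> 0\<close> this, where n = n]
    show ?thesis by (simp only: \<Phi>_def dist_norm twist_inverse_twist_funpow)
  qed
  also have "\<dots> < r"
  proof -
    have "0 < 2 + real n * M" using \<open>M \<ge> 0\<close> by (simp add: add_pos_nonneg)
    then show ?thesis using dz \<rho> by (smt (verit) mult_strict_left_mono)
  qed
  finally have "dist x y < 2 * r"
    using y(1) dist_triangle[of x y "\<Phi> z'"] by (simp add: dist_commute)
  then have "y \<in> cyl_ball x (2 * r)"
    unfolding mem_cyl_ball_iff by (intro exI[of _ 0]) simp
  moreover have "cyl_eq ((T ^^ n) y) z"
    using y(3) by (simp add: cyl_eq_def z'_def)
  ultimately show ?thesis using y(2) by blast
qed

theorem mainTheorem10:
  fixes Im Ip I1 I2 a \<delta> C \<epsilon>1 :: real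
    and \<omega> \<omega>' f f' g g' :: "real \<Rightarrow> real"
    and Teps :: "real \<Rightarrow> real \<times> real \<Rightarrow> real \<times> real"
    and DTeps :: "real \<Rightarrow> real \<times> real \<Rightarrow> (real \<times> real) \<Rightarrow>\<^sub>L (real \<times> real)"
  assumes omega_deriv: "\<And>I. I \<in> {Im..Ip} \<Longrightarrow> (\<omega> has_real_derivative \<omega>' I) (at I within {Im..Ip})"
    and omega'_cont: "continuous_on {Im..Ip} \<omega>'"
    and twist_cond: "\<And>I. I \<in> {Im..Ip} \<Longrightarrow> \<omega>' I > 0"
    and eps1_pos: "\<epsilon>1 > 0"
    and T_periodic: "\<And>\<epsilon> I \<theta>. \<epsilon> \<in> {0<..<\<epsilon>1} \<Longrightarrow> I \<in> {Im..Ip} \<Longrightarrow>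
                       Teps \<epsilon> (I, \<theta> + 1) = Teps \<epsilon> (I, \<theta>) + (0, 1)"
    and T_deriv: "\<And>\<epsilon> x. \<epsilon> \<in> {0<..<\<epsilon>1} \<Longrightarrow> x \<in> {Im..Ip} \<times> UNIV \<Longrightarrow>
                       (Teps \<epsilon> has_derivative blinfun_apply (DTeps \<epsilon> x)) (at x within {Im..Ip} \<times> UNIV)"
    and T_deriv_cont: "\<And>\<epsilon>. \<epsilon> \<in> {0<..<\<epsilon>1} \<Longrightarrow> continuous_on ({Im..Ip} \<times> UNIV) (DTeps \<epsilon>)"
    and C0_close: "\<And>\<epsilon> x. \<epsilon> \<in> {0<..<\<epsilon>1} \<Longrightarrow> x \<in> {Im..Ip} \<times> UNIV \<Longrightarrow>
                       norm (Teps \<epsilon> x - twist \<omega> x) \<le> C * \<epsilon>"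
    and C1_close: "\<And>\<epsilon> x. \<epsilon> \<in> {0<..<\<epsilon>1} \<Longrightarrow> x \<in> {Im..Ip} \<times> UNIV \<Longrightarrow>
                       norm (DTeps \<epsilon> x - twist_deriv \<omega>' x) \<le> C * \<epsilon>"
    and interval: "{I1<..<I2} \<subseteq> {Im..Ip}"
    and f_deriv: "\<And>I. I \<in> {I1<..<I2} \<Longrightarrow> (f has_real_derivative f' I) (at I)"
    and f'_cont: "continuous_on {I1<..<I2} f'"
    and g_deriv: "\<And>I. I \<in> {I1<..<I2} \<Longrightarrow> (g has_real_derivative g' I) (at I)"
    and g'_cont: "continuous_on {I1<..<I2} g'"
    and a_in: "a \<in> {I1<..<I2}"
    and delta_pos: "\<delta> > 0"
  shows "\<exists>\<epsilon>0 > 0. \<epsilon>0 \<le> \<epsilon>1 \<and> (\<exists>N::nat. \<exists>b \<in> {I1<..<I2}. \<exists>\<delta>' > 0.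
           \<forall>\<epsilon> \<in> {0<..<\<epsilon>0}. \<forall>z \<in> cyl_ball (b, g b) \<delta>'.
             \<exists>y \<in> cyl_ball (a, f a) \<delta>.
               (\<forall>k < N. fst ((Teps \<epsilon> ^^ k) y) \<in> {Im..Ip}) \<and>
               cyl_eq ((Teps \<epsilon> ^^ N) y) z)"
proof -
  have Icc_sub: "{I1..I2} \<subseteq> {Im..Ip}"
    using closure_mono[OF interval] a_in by simp
  obtain M where "M > 0"
    and lip: "\<And>x y. x \<in> {Im..Ip} \<Longrightarrow> y \<in> {Im..Ip} \<Longrightarrow> \<bar>\<omega> x - \<omega> y\<bar> \<le> M * \<bar>x - y\<bar>"
    using bounded_derivative_lipschitz_on_Icc[OF omega_deriv omega'_cont] by blast
  have cont_\<omega>: "continuous_on {Im..Ip} \<omega>"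
    using omega_deriv DERIV_continuous continuous_on_eq_continuous_within by metis
  have "C \<ge> 0"
  proof -
    have "(a, 0) \<in> {Im..Ip} \<times> UNIV" using a_in interval by auto
    then have "norm (Teps (\<epsilon>1 / 2) (a, 0) - twist \<omega> (a, 0)) \<le> C * (\<epsilon>1 / 2)"
      using C0_close[of "\<epsilon>1 / 2"] eps1_pos by simp
    then have "0 \<le> C * (\<epsilon>1 / 2)" using norm_ge_zero order_trans by blast
    then show ?thesis using eps1_pos by (simp add: zero_le_mult_iff)
  qed
  define s where "s = min (min ((a - I1) / 4) ((I2 - a) / 4)) (\<delta> / 4)"
  have s: "0 < s" "4 * s \<le> a - I1" "4 * s \<le> I2 - a" "4 * s \<le> \<delta>"
    using a_in delta_pos by (auto simp: s_def min_def)
  have strip: "{a..a + s} \<subseteq> {I1<..<I2}" using s by auto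
  have "\<omega> a < \<omega> (a + s)"
    by (rule pos_derivative_imp_less[OF _ _ omega_deriv twist_cond])
      (use s subset_trans[OF strip interval] in auto)
  moreover have "continuous_on {a..a + s} \<omega>"
    using cont_\<omega> strip interval by (blast intro: continuous_on_subset)
  moreover have "continuous_on {a..a + s} g"
    using strip g_deriv by (blast intro: continuous_at_imp_continuous_on DERIV_isCont)
  ultimately obtain N b v where b: "b \<in> {a..a + s}" and gb: "g b = f a + of_int v + real N * \<omega> b"
    using twist_funpow_reaches_graph[of a "a + s" \<omega> g "f a"] s by auto
  have twist_hits: "(twist \<omega> ^^ N) (b, f a + of_int v) = (b, g b)"
    by (simp add: twist_funpow gb)
  have ball_sub: "cyl_ball (b, f a + of_int v) (2 * s) \<subseteq> cyl_ball (a, f a) \<delta>"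
    using cyl_ball_shift_subset[of "(a, f a)" "(b, f a)" "2 * s" \<delta> v] b s
    by (simp add: dist_Pair_Pair dist_real_def)
  define P where "P = 2 + real N * M"
  define Q where "Q = P * (real N * (2 + M) ^ N) * C"
  define \<epsilon>0 where "\<epsilon>0 = min \<epsilon>1 (s / (Q + 1))"
  have "P \<ge> 2" "Q \<ge> 0" using \<open>M > 0\<close> \<open>C \<ge> 0\<close> by (simp_all add: P_def Q_def)
  have "\<exists>y \<in> cyl_ball (a, f a) \<delta>. (\<forall>k < N. fst ((Teps \<epsilon> ^^ k) y) \<in> {Im..Ip}) \<and> cyl_eq ((Teps \<epsilon> ^^ N) y) z"
    if \<epsilon>: "\<epsilon> \<in> {0<..<\<epsilon>0}" and z: "z \<in> cyl_ball (b, g b) (s / P)" for \<epsilon> z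
  proof -
    have \<epsilon>1: "\<epsilon> \<in> {0<..<\<epsilon>1}" using \<epsilon> by (simp add: \<epsilon>0_def)
    have \<epsilon>_small: "\<epsilon> * (Q + 1) < s" using \<epsilon> \<open>Q \<ge> 0\<close> by (simp add: \<epsilon>0_def pos_less_divide_eq)
    have "\<exists>y \<in> cyl_ball (b, f a + of_int v) (2 * s).
        (\<forall>k<N. fst ((Teps \<epsilon> ^^ k) y) \<in> {I1..I2}) \<and> cyl_eq ((Teps \<epsilon> ^^ N) y) z"
    proof (rule perturbed_twist_funpow_covers_cyl_ball)
      show "continuous_on {I1..I2} \<omega>" using cont_\<omega> Icc_sub by (rule continuous_on_subset)
      show "continuous_on ({I1..I2} \<times> UNIV) (Teps \<epsilon>)"
        using has_derivative_continuous_on[OF T_deriv[OF \<epsilon>1]]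
        by (rule continuous_on_subset) (use Icc_sub in auto)
      show "norm (Teps \<epsilon> x - twist \<omega> x) \<le> C * \<epsilon>" if "fst x \<in> {I1..I2}" for x
        using C0_close[OF \<epsilon>1, of x] that Icc_sub by (auto simp: mem_Times_iff)
      show "\<bar>\<omega> x - \<omega> y\<bar> \<le> M * \<bar>x - y\<bar>" if "x \<in> {I1..I2}" "y \<in> {I1..I2}" for x y
        using lip that Icc_sub by blast
      show "(2 + real N * M) * (C * \<epsilon> * real N * (2 + M) ^ N) \<le> s"
        using \<epsilon>_small \<epsilon> by (simp add: P_def Q_def algebra_simps)
      show "(2 + real N * M) * (s / P) \<le> s"
        using \<open>P \<ge> 2\<close> by (simp add: P_def)
      show "z \<in> cyl_ball ((twist \<omega> ^^ N) (b, f a + of_int v)) (s / P)"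
        using z twist_hits by simp
    qed (use \<open>M > 0\<close> \<open>C \<ge> 0\<close> \<epsilon> b s in auto)
    then show ?thesis using ball_sub Icc_sub by blast
  qed
  moreover have "\<epsilon>0 > 0" "s / P > 0" "b \<in> {I1<..<I2}"
    using s \<open>P \<ge> 2\<close> \<open>Q \<ge> 0\<close> eps1_pos b strip by (auto simp: \<epsilon>0_def)
  ultimately show ?thesis
    by (intro exI[of _ \<epsilon>0] conjI exI[of _ N] bexI[of _ b] exI[of _ "s / P"]) (auto simp: \<epsilon>0_def)
qed

end
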